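(* Let $n,N,M,K\geq 1$, let $D=-i\sum_{j=1}^n\hat{D}_j\partial_j$ with $\hat{D}_j\in\mathcal{L}(\mathbb{C}^N,\mathbb{C}^M)$, and let $A\in L^\infty(\mathbb{R}^n;\mathcal{L}(\mathbb{C}^M,\mathbb{C}^K))$. Suppose there is $c>0$ such that $$\Big|A(x)\sum_{j=1}^n\hat{D}_jv_j\Big|\geq c\Big|\sum_{j=1}^n\hat{D}_jv_j\Big|\qquad\text{for all }v_1,\dots,v_n\in\mathbb{C}^N\text{ and a.e. }x\in\mathbb{R}^n.$$ Then for every $p\in[1,\infty)$ there is $c_p>0$ with $\|ADu\|_{L^p}\geq c_p\|Du\|_{L^p}$ for all $u\in C_c^\infty(\mathbb{R}^n;\mathbb{C}^N)$. *)

theory Defs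
  imports "HOL-Analysis.Analysis"
begin

text \<open>C-infinity: differentiable everywhere, and every directional derivative
  (in every direction) is again C-infinity (coinductively, i.e. all orders).\<close>
coinductive smooth :: "('a::real_normed_vector \<Rightarrow> 'b::real_normed_vector) \<Rightarrow> bool" where
  "(\<forall>x. f differentiable (at x)) \<Longrightarrow> (\<forall>v. smooth (\<lambda>x. frechet_derivative f (at x) v))
     \<Longrightarrow> smooth f"

definition Cc_infty :: "('a::real_normed_vector \<Rightarrow> 'b::real_normed_vector) \<Rightarrow> bool" where
  "Cc_infty u \<longleftrightarrow> smooth u \<and> compact (closure {x. u x \<noteq> 0})"

definition Dop :: "('n::finite \<Rightarrow> complex^'N^'M) \<Rightarrow> (real^'n \<Rightarrow> complex^'N) \<Rightarrow> real^'n \<Rightarrow> complex^'M" where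
  "Dop Dh u x = (\<chi> k. - \<i> * (\<Sum>j\<in>UNIV. Dh j *v frechet_derivative u (at x) (axis j 1)) $ k)"

definition Lp_norm :: "real \<Rightarrow> ('a::euclidean_space \<Rightarrow> 'b::real_normed_vector) \<Rightarrow> real" where
  "Lp_norm p f = (\<integral>x. norm (f x) powr p \<partial>lebesgue) powr (1 / p)"

end

theory Submission
  imports Defs
begin

text \<open>The constant is \<open>c\<^sub>p = c\<close>: \<open>D u(x)\<close> has the form \<open>\<Sum>\<^sub>j D\<^sub>j v\<^sub>j\<close> with \<open>v\<^sub>j = -i \<partial>\<^sub>j u(x)\<close>, so the
  hypothesis gives \<open>|A(x) D u(x)| \<ge> c |D u(x)|\<close> almost everywhere, and raising to the power \<open>p\<close> and
  integrating yields the claim. The only analytic work is to ensure that \<open>|A D u|\<^sup>p\<close> is integrable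
  (otherwise the Bochner integral in \<open>Lp_norm\<close> would be \<open>0\<close>); this holds because \<open>D u\<close> is
  continuous with compact support and \<open>A\<close> is essentially bounded.\<close>

lemma norm_matrix_vector_mult_le:
  fixes A :: "'a::real_normed_algebra_1^'m::finite^'k::finite"
  shows "norm (A *v x) \<le> real CARD('k) * real CARD('m) * norm A * norm x"
proof -
  have entry: "norm ((A *v x) $ i) \<le> real CARD('m) * (norm A * norm x)" for i
  proof -
    have "norm ((A *v x) $ i) \<le> (\<Sum>j\<in>UNIV. norm (A $ i $ j * x $ j))"
      unfolding matrix_vector_mult_def by (simp add: norm_sum)
    also have "\<dots> \<le> (\<Sum>j\<in>(UNIV::'m set). norm A * norm x)"
    proof (rule sum_mono)
      fix j
      have "norm (A $ i $ j) \<le> norm A"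
        using Finite_Cartesian_Product.norm_nth_le[of "A $ i" j]
          Finite_Cartesian_Product.norm_nth_le[of A i]
        by linarith
      moreover have "norm (x $ j) \<le> norm x"
        by (rule Finite_Cartesian_Product.norm_nth_le)
      ultimately have "norm (A $ i $ j) * norm (x $ j) \<le> norm A * norm x"
        by (simp add: mult_mono)
      then show "norm (A $ i $ j * x $ j) \<le> norm A * norm x"
        using norm_mult_ineq order_trans by blast
    qed
    finally show ?thesis by simp
  qed
  have "norm (A *v x) \<le> (\<Sum>i\<in>UNIV. norm ((A *v x) $ i))"
    by (simp add: norm_vec_def L2_set_le_sum)
  also have "\<dots> \<le> (\<Sum>i\<in>(UNIV::'k set). real CARD('m) * (norm A * norm x))"
    by (rule sum_mono[OF entry])
  finally show ?thesis by (simp add: mult.assoc)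
qed

lemma continuous_on_matrix_vector_mult:
  fixes f :: "'a::topological_space \<Rightarrow> 'b::real_normed_algebra_1^'m::finite^'k::finite"
  assumes "continuous_on S f" "continuous_on S g"
  shows "continuous_on S (\<lambda>x. f x *v g x)"
  unfolding matrix_vector_mult_def
  by (intro continuous_intros continuous_on_vec_lambda assms)

lemma continuous_on_vector_scalar_mult:
  fixes f :: "'a::topological_space \<Rightarrow> 'b::real_normed_algebra_1^'m::finite"
  assumes "continuous_on S f"
  shows "continuous_on S (\<lambda>x. c *s f x)"
  unfolding vector_scalar_mult_def
  by (intro continuous_intros continuous_on_vec_lambda assms)

lemma continuous_le_indicator_compact:
  fixes f :: "'a::topological_space \<Rightarrow> 'b::real_normed_vector"
  assumes "continuous_on UNIV f" "compact K" "\<And>x. x \<notin> K \<Longrightarrow> f x = 0"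
  obtains M where "\<And>x. norm (f x) \<le> M * indicator K x"
proof -
  have "bounded (f ` K)"
    using assms(1,2) by (intro compact_imp_bounded compact_continuous_image)
      (auto intro: continuous_on_subset)
  then obtain M where "\<And>x. x \<in> K \<Longrightarrow> norm (f x) \<le> M"
    unfolding bounded_iff by blast
  then have "norm (f x) \<le> M * indicator K x" for x
    using assms(3)[of x] by (cases "x \<in> K") auto
  then show thesis by (rule that)
qed

lemma integrable_powr_norm_le_indicator:
  fixes f :: "'a \<Rightarrow> 'b::{banach, second_countable_topology}"
  assumes f: "f \<in> borel_measurable M" and K: "K \<in> sets M" "emeasure M K < \<infinity>"
    and bound: "AE x in M. norm (f x) \<le> C * indicator K x" and p: "0 < p"
  shows "integrable M (\<lambda>x. norm (f x) powr p)"
proof (rule Bochner_Integration.integrable_bound)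
  show "integrable M (\<lambda>x. C powr p * indicator K x :: real)"
    using K by (intro integrable_mult_right) auto
  show "(\<lambda>x. norm (f x) powr p) \<in> borel_measurable M"
    using f by measurable
  show "AE x in M. norm (norm (f x) powr p) \<le> norm (C powr p * indicator K x :: real)"
    using bound
  proof eventually_elim
    case (elim x)
    then show ?case
      using p by (cases "x \<in> K") (auto intro: powr_mono2)
  qed
qed

lemma Lp_norm_ge_AE:
  assumes c: "0 < c" and p: "0 < p"
    and int_f: "integrable lebesgue (\<lambda>x. norm (f x) powr p)"
    and lower: "AE x in lebesgue. c * norm (g x) \<le> norm (f x)"
  shows "c * Lp_norm p g \<le> Lp_norm p f"
proof (cases "integrable lebesgue (\<lambda>x. norm (g x) powr p)")
  case True
  define I where "I = (\<integral>x. norm (g x) powr p \<partial>lebesgue)"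
  have I: "0 \<le> I" unfolding I_def by simp
  have "AE x in lebesgue. c powr p * norm (g x) powr p \<le> norm (f x) powr p"
    using lower
  proof eventually_elim
    case (elim x)
    then have "(c * norm (g x)) powr p \<le> norm (f x) powr p"
      using c p by (intro powr_mono2) auto
    then show ?case using c by (simp add: powr_mult)
  qed
  then have "c powr p * I \<le> (\<integral>x. norm (f x) powr p \<partial>lebesgue)"
    unfolding I_def using integral_mono_AE[OF integrable_mult_right[OF True] int_f] by simp
  then have "(c powr p * I) powr (1/p) \<le> Lp_norm p f"
    unfolding Lp_norm_def using c I p by (intro powr_mono2) auto
  moreover have "(c powr p * I) powr (1/p) = c * Lp_norm p g"
    unfolding Lp_norm_def I_def[symmetric] using p c I by (simp add: powr_mult powr_powr)
  ultimately show ?thesis by simp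
next
  case False
  then show ?thesis
    by (simp add: Lp_norm_def not_integrable_integral_eq)
qed

lemma smoothD:
  assumes "smooth u"
  shows "\<forall>x. u differentiable (at x)" "smooth (\<lambda>x. frechet_derivative u (at x) v)"
  using assms by (cases rule: smooth.cases, simp)+

lemma continuous_on_frechet_derivative_smooth:
  assumes "smooth u"
  shows "continuous_on UNIV (\<lambda>x. frechet_derivative u (at x) v)"
proof -
  have "\<forall>x. (\<lambda>x. frechet_derivative u (at x) v) differentiable (at x)"
    by (rule smoothD(1)[OF smoothD(2)[OF assms]])
  then have "(\<lambda>x. frechet_derivative u (at x) v) differentiable_on UNIV"
    by (intro differentiable_at_imp_differentiable_on) blast
  then show ?thesis
    by (rule differentiable_imp_continuous_on)
qed

lemma frechet_derivative_eq_0_outside_support: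
  assumes "x \<notin> closure {x. u x \<noteq> 0}"
  shows "frechet_derivative u (at x) v = 0"
proof -
  have "(u has_derivative (\<lambda>h. 0)) (at x)"
  proof (rule has_derivative_transform_within_open)
    show "((\<lambda>y. 0) has_derivative (\<lambda>h. 0)) (at x)" by simp
    show "open (- closure {x. u x \<noteq> 0})" "x \<in> - closure {x. u x \<noteq> 0}"
      using assms by auto
    show "0 = u y" if "y \<in> - closure {x. u x \<noteq> 0}" for y
      using that closure_subset[of "{x. u x \<noteq> 0}"] by auto
  qed
  then have "frechet_derivative u (at x) = (\<lambda>h. 0)"
    by (rule frechet_derivative_at[symmetric])
  then show ?thesis by simp
qed

lemma Dop_eq_sum:
  "Dop Dh u x = (\<Sum>j\<in>UNIV. Dh j *v ((- \<i>) *s frechet_derivative u (at x) (axis j 1)))"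
proof -
  have scalar_commute: "a *s (\<Sum>j\<in>UNIV. Dh j *v w j) = (\<Sum>j\<in>UNIV. Dh j *v (a *s w j))" for a w
    by (simp add: vector_scalar_commute vec_eq_iff sum_distrib_left)
  have "Dop Dh u x = (- \<i>) *s (\<Sum>j\<in>UNIV. Dh j *v frechet_derivative u (at x) (axis j 1))"
    unfolding Dop_def by (simp add: vec_eq_iff)
  then show ?thesis
    by (simp only: scalar_commute)
qed

lemma continuous_on_Dop: "smooth u \<Longrightarrow> continuous_on UNIV (Dop Dh u)"
  unfolding Dop_eq_sum
  by (intro continuous_on_sum continuous_on_matrix_vector_mult continuous_on_const
      continuous_on_vector_scalar_mult continuous_on_frechet_derivative_smooth)

lemma Dop_eq_0_outside_support: "x \<notin> closure {x. u x \<noteq> 0} \<Longrightarrow> Dop Dh u x = 0"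
  unfolding Dop_eq_sum by (simp add: frechet_derivative_eq_0_outside_support)

lemma integrable_powr_norm_mult_Dop:
  fixes Dh :: "'n::finite \<Rightarrow> complex^'N::finite^'M::finite"
    and A :: "real^'n \<Rightarrow> complex^'M^'K::finite"
  assumes A_meas: "A \<in> borel_measurable lebesgue"
    and A_bdd: "AE x in lebesgue. norm (A x) \<le> B"
    and u: "Cc_infty u" and p: "0 < p"
  shows "integrable lebesgue (\<lambda>x. norm (A x *v Dop Dh u x) powr p)"
proof -
  define K where "K = closure {x. u x \<noteq> 0}"
  have smooth: "smooth u" and K: "compact K"
    using u unfolding Cc_infty_def K_def by auto
  have cont: "continuous_on UNIV (Dop Dh u)"
    using smooth by (rule continuous_on_Dop)
  obtain M where M: "\<And>x. norm (Dop Dh u x) \<le> M * indicator K x"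
    using continuous_le_indicator_compact[OF cont K] Dop_eq_0_outside_support K_def by blast
  have D_meas: "Dop Dh u \<in> borel_measurable lebesgue"
    using continuous_imp_measurable_on_sets_lebesgue[OF cont] lebesgue_on_UNIV_eq by force
  have "continuous_on UNIV (\<lambda>z. fst z *v snd z :: complex^'K)"
    by (intro continuous_on_matrix_vector_mult continuous_on_fst continuous_on_snd continuous_on_id)
  then have "(\<lambda>x. A x *v Dop Dh u x) \<in> borel_measurable lebesgue"
    by (intro borel_measurable_continuous_Pair[OF A_meas D_meas]) (simp add: case_prod_beta)
  moreover have "AE x in lebesgue.
      norm (A x *v Dop Dh u x) \<le> (real CARD('K) * real CARD('M) * \<bar>B\<bar> * M) * indicator K x"
    using A_bdd
  proof eventually_elim
    case (elim x)
    have "norm (A x *v Dop Dh u x) \<le> real CARD('K) * real CARD('M) * norm (A x) * norm (Dop Dh u x)"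
      by (rule norm_matrix_vector_mult_le)
    also have "\<dots> \<le> real CARD('K) * real CARD('M) * \<bar>B\<bar> * (M * indicator K x)"
      using elim M[of x] by (intro mult_mono) auto
    finally show ?case by simp
  qed
  ultimately show ?thesis
    using lmeasurable_compact[OF K] p
    by (intro integrable_powr_norm_le_indicator) (auto simp: fmeasurable_def)
qed

theorem propositionA3:
  fixes Dh :: "'n::finite \<Rightarrow> complex^'N::finite^'M::finite"
    and A :: "real^'n \<Rightarrow> complex^'M^'K::finite"
  assumes A_meas: "A \<in> borel_measurable lebesgue"
    and A_bdd: "\<exists>B. AE x in lebesgue. norm (A x) \<le> B"
    and lower: "\<exists>c>0. AE x in lebesgue. \<forall>v :: 'n \<Rightarrow> complex^'N.
        norm (A x *v (\<Sum>j\<in>UNIV. Dh j *v v j)) \<ge> c * norm (\<Sum>j\<in>UNIV. Dh j *v v j)"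
  shows "\<forall>p::real. 1 \<le> p \<longrightarrow> (\<exists>cp>0. \<forall>u :: real^'n \<Rightarrow> complex^'N. Cc_infty u \<longrightarrow>
           Lp_norm p (\<lambda>x. A x *v Dop Dh u x) \<ge> cp * Lp_norm p (Dop Dh u))"
proof (intro allI impI)
  fix p :: real
  assume p: "1 \<le> p"
  obtain B where B: "AE x in lebesgue. norm (A x) \<le> B"
    using A_bdd by blast
  obtain c where c: "c > 0" and c_lower: "AE x in lebesgue. \<forall>v :: 'n \<Rightarrow> complex^'N.
      norm (A x *v (\<Sum>j\<in>UNIV. Dh j *v v j)) \<ge> c * norm (\<Sum>j\<in>UNIV. Dh j *v v j)"
    using lower by blast
  have "c * Lp_norm p (Dop Dh u) \<le> Lp_norm p (\<lambda>x. A x *v Dop Dh u x)" if u: "Cc_infty u" for u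
  proof (rule Lp_norm_ge_AE[OF c])
    show "0 < p" using p by simp
    then show "integrable lebesgue (\<lambda>x. norm (A x *v Dop Dh u x) powr p)"
      by (rule integrable_powr_norm_mult_Dop[OF A_meas B u])
    show "AE x in lebesgue. c * norm (Dop Dh u x) \<le> norm (A x *v Dop Dh u x)"
      using c_lower by eventually_elim (simp only: Dop_eq_sum)
  qed
  with c show "\<exists>cp>0. \<forall>u :: real^'n \<Rightarrow> complex^'N. Cc_infty u \<longrightarrow>
      Lp_norm p (\<lambda>x. A x *v Dop Dh u x) \<ge> cp * Lp_norm p (Dop Dh u)"
    by blast
qed

end
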